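(* Let $n \geq 1$ and $i \in \mathbb{Z}_{\geq 2}$. Then $\dim_{\mathbb{F}_2} \mathrm{Gov}(V_{[n]}, i) = (i-1)\binom{n}{i}$.
   Context: $V_{[n]} = \mathbb{F}_2^n$ with standard basis $e_1,\dots,e_n$ and dual basis $\chi_1,\dots,\chi_n$ ($\chi_s(e_{s'}) = \delta_{s,s'}$). $\mathrm{Multi}(V_{[n]}, i)$ is the space of multilinear maps $V_{[n]}^i \to \mathbb{F}_2$, and $\chi_{h_1}\otimes\cdots\otimes\chi_{h_i}$ denotes $(\sigma_1,\dots,\sigma_i)\mapsto \prod_s \chi_{h_s}(\sigma_s)$. For $A \subseteq [n]$ with $\#A = i \geq 2$ and $x \in A$, the governing tensor is $\phi_{(A,x)} = \sum_{\tau} \chi_{\tau(1)}\otimes\cdots\otimes\chi_{\tau(i)}$, the sum over bijections $\tau: \{1,\dots,i\} \to A$ with $\tau(i-1) = x$ or $\tau(i) = x$. $\mathrm{Gov}(V_{[n]}, i)$ is the span of all $\phi_{(A,x)}$ with $A \subseteq [n]$, $\#A = i$, $x \in A$. *)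

theory Defs
  imports Complex_Main "HOL-Library.Z2" "HOL-Library.FuncSet" "HOL-Library.Function_Algebras"
begin

text \<open>V_[n] = F_2^n is represented by functions v :: nat => bit
  supported on {1..n} (v k is the k-th coordinate, i.e. chi_k(v)).  An i-tuple of
  vectors is a function sigma :: nat => (nat => bit), with sigma s in V_[n] for
  s in {1..i} and sigma s = 0 otherwise.  Maps V_[n]^i -> F_2 are functions on such
  tuples, extended by 0 outside, forming an F_2-vector space under pointwise operations.\<close>

definition Vn :: "nat \<Rightarrow> (nat \<Rightarrow> bit) set" where
  "Vn n = {v. \<forall>k. k \<notin> {1..n} \<longrightarrow> v k = 0}"

definition tuples :: "nat \<Rightarrow> nat \<Rightarrow> (nat \<Rightarrow> nat \<Rightarrow> bit) set" where
  "tuples n i = {\<sigma>. (\<forall>s\<in>{1..i}. \<sigma> s \<in> Vn n) \<and> (\<forall>s. s \<notin> {1..i} \<longrightarrow> \<sigma> s = 0)}"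

definition chi :: "nat \<Rightarrow> (nat \<Rightarrow> bit) \<Rightarrow> bit" where
  "chi h v = v h"

definition tensor :: "nat \<Rightarrow> nat \<Rightarrow> (nat \<Rightarrow> nat) \<Rightarrow> (nat \<Rightarrow> nat \<Rightarrow> bit) \<Rightarrow> bit" where
  "tensor n i h = (\<lambda>\<sigma>. if \<sigma> \<in> tuples n i then (\<Prod>s\<in>{1..i}. chi (h s) (\<sigma> s)) else 0)"

definition gov_tensor :: "nat \<Rightarrow> nat set \<Rightarrow> nat \<Rightarrow> (nat \<Rightarrow> nat \<Rightarrow> bit) \<Rightarrow> bit" where
  "gov_tensor n A x = (let i = card A in
     (\<Sum>\<tau>\<in>{\<tau> \<in> {1..i} \<rightarrow>\<^sub>E A. bij_betw \<tau> {1..i} A \<and> (\<tau> (i - 1) = x \<or> \<tau> i = x)}.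
        tensor n i \<tau>))"

definition F2scale :: "bit \<Rightarrow> ((nat \<Rightarrow> nat \<Rightarrow> bit) \<Rightarrow> bit) \<Rightarrow> ((nat \<Rightarrow> nat \<Rightarrow> bit) \<Rightarrow> bit)" where
  "F2scale c f = (\<lambda>\<sigma>. c * f \<sigma>)"

definition Gov :: "nat \<Rightarrow> nat \<Rightarrow> ((nat \<Rightarrow> nat \<Rightarrow> bit) \<Rightarrow> bit) set" where
  "Gov n i = module.span F2scale
     {gov_tensor n A x | A x. A \<subseteq> {1..n} \<and> card A = i \<and> x \<in> A}"

end

theory Submission
  imports Defs
begin

text \<open>Evaluating a multilinear map on the tuple of standard basis vectors
  (e_\<tau>(1), ..., e_\<tau>(i)) reads off its coefficient at chi_\<tau>(1) (x) ... (x) chi_\<tau>(i).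
  Hence phi_(A,x) is 1 on this tuple exactly when \<tau> is a bijection onto A with
  x \<in> {\<tau>(i-1), \<tau>(i)}.  Every such \<tau> therefore occurs in exactly two of the tensors
  phi_(A,x), x \<in> A, so over F_2 they sum to zero and phi_(A, max A) is a combination of the
  others.  The remaining phi_(A,x), x \<noteq> max A, are independent: for \<tau> with \<tau>(i-1) = x and
  \<tau>(i) = max A, phi_(A,x) is the only one of them that is 1 on the corresponding tuple.  So
  they form a basis of Gov(V_[n], i), and there are (i-1) (n choose i) of them.\<close>

global_interpretation F2: vector_space F2scale
  by unfold_locales (auto simp: F2scale_def fun_eq_iff algebra_simps)

lemma sum_fun_apply: "(\<Sum>x\<in>S. f x) \<sigma> = (\<Sum>x\<in>S. f x \<sigma>)"
  by (induction S rule: infinite_finite_induct) auto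

lemma prod_of_bool:
  "finite S \<Longrightarrow> (\<Prod>s\<in>S. of_bool (P s) :: 'a :: comm_semiring_1) = of_bool (\<forall>s\<in>S. P s)"
  by (induction S rule: finite_induct) auto

lemma finite_bij_betw_PiE:
  assumes "finite I"
  shows "finite {\<tau> \<in> I \<rightarrow>\<^sub>E A. bij_betw \<tau> I A \<and> P \<tau>}"
proof (cases "finite A")
  case True
  then show ?thesis
    using assms by (intro finite_subset[OF _ finite_PiE[of I "\<lambda>_. A"]]) auto
next
  case False
  then have "\<not> bij_betw \<tau> I A" for \<tau>
    using assms bij_betw_finite by blast
  then show ?thesis
    by simp
qed

definition basis_tuple :: "nat \<Rightarrow> (nat \<Rightarrow> nat) \<Rightarrow> nat \<Rightarrow> nat \<Rightarrow> bit" where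
  "basis_tuple i \<tau> = (\<lambda>s. if s \<in> {1..i} then (\<lambda>k. of_bool (k = \<tau> s)) else 0)"

lemma basis_tuple_in_tuples: "\<tau> ` {1..i} \<subseteq> {1..n} \<Longrightarrow> basis_tuple i \<tau> \<in> tuples n i"
  unfolding basis_tuple_def tuples_def Vn_def by auto

lemma tensor_basis_tuple:
  assumes "\<tau> ` {1..i} \<subseteq> {1..n}"
  shows "tensor n i h (basis_tuple i \<tau>) = of_bool (\<forall>s\<in>{1..i}. h s = \<tau> s)"
proof -
  have "tensor n i h (basis_tuple i \<tau>) = (\<Prod>s\<in>{1..i}. chi (h s) (basis_tuple i \<tau> s))"
    by (simp add: tensor_def basis_tuple_in_tuples[OF assms])
  also have "\<dots> = (\<Prod>s\<in>{1..i}. of_bool (h s = \<tau> s))"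
    by (rule prod.cong) (simp_all add: chi_def basis_tuple_def)
  finally show ?thesis
    by (simp add: prod_of_bool)
qed

lemma gov_tensor_basis_tuple:
  assumes "card A = i" and "A' \<subseteq> {1..n}"
    and \<tau>: "\<tau> \<in> {1..i} \<rightarrow>\<^sub>E A'" "bij_betw \<tau> {1..i} A'"
  shows "gov_tensor n A x (basis_tuple i \<tau>) = of_bool (A = A' \<and> (\<tau> (i - 1) = x \<or> \<tau> i = x))"
proof -
  let ?S = "{t \<in> {1..i} \<rightarrow>\<^sub>E A. bij_betw t {1..i} A \<and> (t (i - 1) = x \<or> t i = x)}"
  have "\<tau> ` {1..i} \<subseteq> {1..n}"
    using assms(2) \<tau>(1) by auto
  moreover have "(\<forall>s\<in>{1..i}. t s = \<tau> s) \<longleftrightarrow> t = \<tau>" if "t \<in> ?S" for t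
    using that \<tau>(1) by (auto simp: PiE_def extensional_def fun_eq_iff)
  ultimately have "tensor n i t (basis_tuple i \<tau>) = of_bool (t = \<tau>)" if "t \<in> ?S" for t
    using that by (simp add: tensor_basis_tuple)
  then have "gov_tensor n A x (basis_tuple i \<tau>) = (\<Sum>t\<in>?S. of_bool (t = \<tau>))"
    unfolding gov_tensor_def Let_def assms(1) sum_fun_apply by (rule sum.cong[OF refl])
  also have "\<dots> = of_bool (\<tau> \<in> ?S)"
    by (simp add: of_bool_def sum.delta' finite_bij_betw_PiE del: of_bool_eq_1_iff)
  also have "(\<tau> \<in> ?S) = (A = A' \<and> (\<tau> (i - 1) = x \<or> \<tau> i = x))"
    using \<tau> bij_betw_imp_surj_on[of \<tau> "{1..i}"] by auto
  finally show ?thesis .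
qed

lemma sum_gov_tensor_eq_0:
  assumes "finite A" and "2 \<le> card A"
  shows "(\<Sum>x\<in>A. gov_tensor n A x) = 0"
proof
  fix \<sigma>
  let ?i = "card A"
  let ?B = "{\<tau> \<in> {1..?i} \<rightarrow>\<^sub>E A. bij_betw \<tau> {1..?i} A}"
  have "(\<Sum>x\<in>A. gov_tensor n A x) \<sigma>
      = (\<Sum>x\<in>A. \<Sum>\<tau>\<in>{\<tau> \<in> ?B. \<tau> (?i - 1) = x \<or> \<tau> ?i = x}. tensor n ?i \<tau> \<sigma>)"
    unfolding gov_tensor_def Let_def sum_fun_apply by (simp add: conj_assoc)
  also have "\<dots> = (\<Sum>\<tau>\<in>?B. \<Sum>x\<in>{x \<in> A. \<tau> (?i - 1) = x \<or> \<tau> ?i = x}. tensor n ?i \<tau> \<sigma>)"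
    by (rule sum.swap_restrict[OF assms(1)]) (use finite_bij_betw_PiE[of "{1..?i}" A "\<lambda>_. True"] in simp)
  also have "\<dots> = 0"
  proof (rule sum.neutral, rule ballI)
    fix \<tau> assume \<tau>: "\<tau> \<in> ?B"
    have "inj_on \<tau> {1..?i}"
      using \<tau> by (simp add: bij_betw_def)
    then have "\<tau> (?i - 1) \<noteq> \<tau> ?i"
      using assms(2) by (simp add: inj_on_eq_iff)
    moreover have "{x \<in> A. \<tau> (?i - 1) = x \<or> \<tau> ?i = x} = {\<tau> (?i - 1), \<tau> ?i}"
      using \<tau> assms(2) by auto
    ultimately show "(\<Sum>x\<in>{x \<in> A. \<tau> (?i - 1) = x \<or> \<tau> ?i = x}. tensor n ?i \<tau> \<sigma>) = 0"
      by simp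
  qed
  finally show "(\<Sum>x\<in>A. gov_tensor n A x) \<sigma> = 0 \<sigma>"
    by simp
qed

lemma gov_tensor_eq_sum_others:
  assumes "finite A" and "2 \<le> card A" and "x \<in> A"
  shows "gov_tensor n A x = (\<Sum>z\<in>A - {x}. gov_tensor n A z)"
proof -
  have "gov_tensor n A x + (\<Sum>z\<in>A - {x}. gov_tensor n A z) = (\<Sum>z\<in>A. gov_tensor n A z)"
    by (rule sum.remove[OF assms(1,3), symmetric])
  also have "\<dots> = 0"
    by (rule sum_gov_tensor_eq_0[OF assms(1,2)])
  finally have "- gov_tensor n A x = (\<Sum>z\<in>A - {x}. gov_tensor n A z)"
    by (rule minus_unique)
  then show ?thesis
    by (simp add: fun_Compl_def)
qed

lemma exists_bij_betw_last_two:
  assumes "finite A" and "y \<in> A" and "m \<in> A" and "y \<noteq> m"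
  shows "\<exists>\<tau> \<in> {1..card A} \<rightarrow>\<^sub>E A.
           bij_betw \<tau> {1..card A} A \<and> \<tau> (card A - 1) = y \<and> \<tau> (card A) = m"
proof -
  let ?i = "card A"
  have "card {y, m} \<le> ?i"
    using assms by (intro card_mono) auto
  then have i: "2 \<le> ?i"
    using assms(4) by simp
  have "card (A - {y, m}) = card {1..?i - 2}"
    using assms by (simp add: card_Diff_subset)
  then obtain g where g: "bij_betw g {1..?i - 2} (A - {y, m})"
    using assms(1) finite_same_card_bij by (metis finite_Diff finite_atLeastAtMost)
  define h where "h s = (if s = ?i - 1 then y else m)" for s
  have "bij_betw h {?i - 1, ?i} {y, m}"
    using assms(4) i by (auto simp: bij_betw_def h_def)
  then have "bij_betw (\<lambda>s. if s \<in> {1..?i - 2} then g s else h s)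
      ({1..?i - 2} \<union> {?i - 1, ?i}) ((A - {y, m}) \<union> {y, m})"
    using g by (intro bij_betw_disjoint_Un) auto
  moreover have "{1..?i - 2} \<union> {?i - 1, ?i} = {1..?i}"
    using i by auto
  moreover have "(A - {y, m}) \<union> {y, m} = A"
    using assms by auto
  ultimately have bij: "bij_betw (\<lambda>s. if s \<in> {1..?i - 2} then g s else h s) {1..?i} A"
    by simp
  show ?thesis
    using bij i bij_betw_imp_funcset[OF bij]
    by (intro bexI[of _ "restrict (\<lambda>s. if s \<in> {1..?i - 2} then g s else h s) {1..?i}"])
      (auto simp: h_def)
qed

definition gov_index :: "nat \<Rightarrow> nat \<Rightarrow> (nat set \<times> nat) set" where
  "gov_index n i = (SIGMA A:{A. A \<subseteq> {1..n} \<and> card A = i}. A - {Max A})"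

lemma finite_gov_index: "finite (gov_index n i)"
  unfolding gov_index_def by (rule finite_SigmaI) (auto dest: finite_subset[OF _ finite_atLeastAtMost])

lemma card_gov_index: "card (gov_index n i) = (i - 1) * (n choose i)"
proof -
  let ?S = "{A. A \<subseteq> {1..n} \<and> card A = i}"
  have "card (gov_index n i) = (\<Sum>A\<in>?S. card (A - {Max A}))"
    unfolding gov_index_def by (rule card_SigmaI) (auto intro: finite_subset)
  also have "\<dots> = (\<Sum>A\<in>?S. i - 1)"
  proof (rule sum.cong[OF refl])
    fix A assume "A \<in> ?S"
    then have "finite A" and "card A = i"
      by (auto dest: finite_subset[OF _ finite_atLeastAtMost])
    then show "card (A - {Max A}) = i - 1"
      by (cases "A = {}") auto
  qed
  also have "\<dots> = (i - 1) * (n choose i)"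
    by (simp add: n_subsets)
  finally show ?thesis .
qed

lemma gov_index_dual_points:
  assumes "p \<in> gov_index n i"
  shows "\<exists>\<sigma>. \<forall>q \<in> gov_index n i. case_prod (gov_tensor n) q \<sigma> = of_bool (q = p)"
proof -
  obtain A' y where p: "p = (A', y)" and A': "A' \<subseteq> {1..n}" "card A' = i" "y \<in> A'" "y \<noteq> Max A'"
    using assms by (auto simp: gov_index_def)
  have "finite A'"
    using A'(1) finite_subset by blast
  moreover have "Max A' \<in> A'"
    using calculation A'(3) Max_in by blast
  ultimately obtain \<tau> where \<tau>: "\<tau> \<in> {1..i} \<rightarrow>\<^sub>E A'" "bij_betw \<tau> {1..i} A'" "\<tau> (i - 1) = y" "\<tau> i = Max A'"
    using exists_bij_betw_last_two[of A' y "Max A'"] A' by auto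
  have "gov_tensor n A x (basis_tuple i \<tau>) = of_bool ((A, x) = p)" if "(A, x) \<in> gov_index n i" for A x
    using that gov_tensor_basis_tuple[OF _ A'(1) \<tau>(1,2)] \<tau>(3,4) p by (auto simp: gov_index_def)
  then have "\<forall>q \<in> gov_index n i. case_prod (gov_tensor n) q (basis_tuple i \<tau>) = of_bool (q = p)"
    by auto
  then show ?thesis
    by blast
qed

lemma
  fixes f :: "'i \<Rightarrow> (nat \<Rightarrow> nat \<Rightarrow> bit) \<Rightarrow> bit"
  assumes dual: "\<And>p. p \<in> I \<Longrightarrow> \<exists>\<sigma>. \<forall>q \<in> I. f q \<sigma> = of_bool (q = p)"
  shows inj_on_if_dual_points: "inj_on f I"
    and independent_if_dual_points: "finite I \<Longrightarrow> F2.independent (f ` I)"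
proof -
  show inj: "inj_on f I"
  proof (rule inj_onI)
    fix p q assume p: "p \<in> I" and q: "q \<in> I" and eq: "f p = f q"
    obtain \<sigma> where "\<forall>r \<in> I. f r \<sigma> = of_bool (r = q)"
      using dual[OF q] by blast
    then have "f p \<sigma> = of_bool (p = q)" and "f q \<sigma> = of_bool (q = q)"
      using p q by blast+
    with eq show "p = q"
      by simp
  qed
  assume "finite I"
  show "F2.independent (f ` I)"
  proof
    assume "F2.dependent (f ` I)"
    then obtain c p where p: "p \<in> I" and "c (f p) \<noteq> 0"
      and sum: "(\<Sum>w\<in>f ` I. F2scale (c w) w) = 0"
      unfolding F2.dependent_finite[OF finite_imageI[OF \<open>finite I\<close>]] by blast
    obtain \<sigma> where \<sigma>: "\<forall>q \<in> I. f q \<sigma> = of_bool (q = p)"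
      using dual[OF p] by blast
    have "0 = (\<Sum>w\<in>f ` I. F2scale (c w) w) \<sigma>"
      by (simp only: sum zero_fun_apply)
    also have "\<dots> = (\<Sum>q\<in>I. c (f q) * f q \<sigma>)"
      unfolding sum_fun_apply F2scale_def sum.reindex[OF inj] by (simp only: comp_def)
    also have "\<dots> = (\<Sum>q\<in>I. if q = p then c (f p) else 0)"
    proof (rule sum.cong[OF refl])
      fix q assume "q \<in> I"
      then have "f q \<sigma> = of_bool (q = p)"
        using \<sigma> by blast
      then show "c (f q) * f q \<sigma> = (if q = p then c (f p) else 0)"
        by simp
    qed
    also have "\<dots> = c (f p)"
      using sum.delta[OF \<open>finite I\<close>, of p "\<lambda>_. c (f p)"] p by simp
    finally show False
      using \<open>c (f p) \<noteq> 0\<close> by simp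
  qed
qed

lemma Gov_eq_span_gov_index:
  assumes "2 \<le> i"
  shows "Gov n i = F2.span (case_prod (gov_tensor n) ` gov_index n i)"
proof -
  let ?G = "{gov_tensor n A x | A x. A \<subseteq> {1..n} \<and> card A = i \<and> x \<in> A}"
  let ?B = "case_prod (gov_tensor n) ` gov_index n i"
  have B_sub_G: "?B \<subseteq> ?G"
  proof (rule image_subsetI)
    fix p assume "p \<in> gov_index n i"
    then show "case_prod (gov_tensor n) p \<in> ?G"
      by (auto simp: gov_index_def)
  qed
  have "gov_tensor n A x \<in> F2.span ?B" if A: "A \<subseteq> {1..n}" "card A = i" "x \<in> A" for A x
  proof -
    have others: "gov_tensor n A z \<in> F2.span ?B" if "z \<in> A - {Max A}" for z
    proof (rule F2.span_base)
      have "(A, z) \<in> gov_index n i"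
        using that A by (simp add: gov_index_def)
      then show "gov_tensor n A z \<in> ?B"
        by (rule image_eqI[rotated]) simp
    qed
    show ?thesis
    proof (cases "x = Max A")
      case True
      have "finite A"
        using A(1) finite_subset by blast
      then have "gov_tensor n A x = (\<Sum>z\<in>A - {x}. gov_tensor n A z)"
        using gov_tensor_eq_sum_others A(2,3) assms by simp
      also have "\<dots> \<in> F2.span ?B"
        using others True by (intro F2.span_sum) simp
      finally show ?thesis .
    next
      case False
      then show ?thesis
        using others A(3) by simp
    qed
  qed
  then have "?G \<subseteq> F2.span ?B"
    by blast
  moreover have "?B \<subseteq> F2.span ?G"
    using B_sub_G F2.span_superset by (rule order_trans)
  ultimately show ?thesis
    unfolding Gov_def F2.span_eq by (intro conjI)
qed

theorem proposition2p1:
  fixes n i :: nat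
  assumes "n \<ge> 1" and "i \<ge> 2"
  shows "vector_space.dim F2scale (Gov n i) = (i - 1) * (n choose i)"
proof -
  let ?\<phi> = "case_prod (gov_tensor n)"
  have "vector_space.dim F2scale (Gov n i) = F2.dim (F2.span (?\<phi> ` gov_index n i))"
    using Gov_eq_span_gov_index[OF assms(2)] by simp
  also have "\<dots> = card (?\<phi> ` gov_index n i)"
    using independent_if_dual_points[OF gov_index_dual_points finite_gov_index]
    by (rule F2.dim_span_eq_card_independent)
  also have "\<dots> = card (gov_index n i)"
    using inj_on_if_dual_points[OF gov_index_dual_points] by (rule card_image)
  also have "\<dots> = (i - 1) * (n choose i)"
    by (rule card_gov_index)
  finally show ?thesis .
qed

end
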